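(* If $q=p^{2r}$ where $p$ is an odd prime and $r\ge1$ is an integer, then $\chi(ER_q)\le 4\sqrt{q}+1$.
   Context: For a prime power $q$, $ER_q$ is the graph whose vertices are the points of $PG(2,q)$, i.e. the $1$-dimensional subspaces of $\mathbb{F}_q^3$, where distinct vertices $(x_0,x_1,x_2)$ and $(y_0,y_1,y_2)$ (homogeneous coordinates) are adjacent if and only if $x_0y_0+x_1y_1+x_2y_2=0$. $\chi$ denotes the chromatic number. *)

theory Defs
  imports Complex_Main "HOL-Computational_Algebra.Primes"
begin

definition scal3 :: "'a::field \<Rightarrow> 'a \<times> 'a \<times> 'a \<Rightarrow> 'a \<times> 'a \<times> 'a" where
  "scal3 c v = (case v of (x, y, z) \<Rightarrow> (c * x, c * y, c * z))"

definition dot3 :: "'a::field \<times> 'a \<times> 'a \<Rightarrow> 'a \<times> 'a \<times> 'a \<Rightarrow> 'a" where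
  "dot3 u v = (case u of (x0, x1, x2) \<Rightarrow> case v of (y0, y1, y2) \<Rightarrow> x0 * y0 + x1 * y1 + x2 * y2)"

definition PG2_points :: "('a::field \<times> 'a \<times> 'a) set set" where
  "PG2_points = {L. \<exists>v. v \<noteq> (0, 0, 0) \<and> L = range (\<lambda>c. scal3 c v)}"

definition ER_adj :: "('a::field \<times> 'a \<times> 'a) set \<Rightarrow> ('a \<times> 'a \<times> 'a) set \<Rightarrow> bool" where
  "ER_adj L M \<longleftrightarrow> L \<noteq> M \<and> (\<forall>u\<in>L. \<forall>v\<in>M. dot3 u v = 0)"

definition chromatic_number :: "'v set \<Rightarrow> ('v \<Rightarrow> 'v \<Rightarrow> bool) \<Rightarrow> nat" where
  "chromatic_number V E = (LEAST k. \<exists>c :: 'v \<Rightarrow> nat.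
      (\<forall>v\<in>V. c v < k) \<and> (\<forall>u\<in>V. \<forall>v\<in>V. E u v \<longrightarrow> c u \<noteq> c v))"

end

theory Submission
  imports Defs "HOL-Computational_Algebra.Polynomial" "HOL-Number_Theory.Residues"
begin

text \<open>Write a point of \<open>PG(2,q)\<close> as the coefficient triple \<open>(a, b, c)\<close> of a quadratic
  \<open>aX\<^sup>2 + bX + c\<close>; since \<open>-1\<close> is a square in \<open>F\<^sub>q\<close>, a linear change of coordinates turns the
  dot product into the polar form of the discriminant \<open>b\<^sup>2 - 4ac\<close>. Let \<open>\<sigma>(x) = x\<^sup>s\<close> with
  \<open>s = \<surd>q\<close>, an involution with fixed field \<open>F\<^sub>s\<close>. Among the points \<open>Q\<close> orthogonal to \<open>\<sigma>(Q)\<close>,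
  each point has at most one neighbour, namely \<open>\<sigma>(Q)\<close>, so they induce a matching, which is
  2-colourable. Affine substitutions \<open>X \<mapsto> dX + c\<close> preserve orthogonality, and the \<open>2s\<close>
  substitutions \<open>X \<mapsto> X + wt\<close>, \<open>X \<mapsto> wX + t\<close> (\<open>t \<in> F\<^sub>s\<close>, \<open>\<sigma>(w) = -w\<close>) bring every point with
  \<open>a \<noteq> 0\<close> into that set. This gives \<open>2s\<close> classes with two colours each; the remaining points
  have \<open>a = 0 \<noteq> b\<close>, are pairwise non-adjacent and share one further colour: \<open>4s + 1\<close> in all.\<close>

section \<open>Colouring a graph whose classes induce matchings\<close>

lemma chromatic_number_le:
  assumes "\<forall>v\<in>V. c v < k" and "\<forall>u\<in>V. \<forall>v\<in>V. E u v \<longrightarrow> c u \<noteq> c v"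
  shows "chromatic_number V E \<le> k"
  unfolding chromatic_number_def by (rule Least_le) (use assms in blast)

lemma matching_two_colouring:
  assumes "finite V"
    and sym: "\<And>u v. u \<in> V \<Longrightarrow> v \<in> V \<Longrightarrow> E u v \<Longrightarrow> E v u"
    and irrefl: "\<And>v. v \<in> V \<Longrightarrow> \<not> E v v"
    and matching: "\<And>u v v'. u \<in> V \<Longrightarrow> v \<in> V \<Longrightarrow> v' \<in> V \<Longrightarrow> E u v \<Longrightarrow> E u v' \<Longrightarrow> v = v'"
  shows "\<exists>c :: 'v \<Rightarrow> bool. \<forall>u\<in>V. \<forall>v\<in>V. E u v \<longrightarrow> c u \<noteq> c v"
proof -
  obtain f :: "'v \<Rightarrow> nat" where f: "inj_on f V"
    using finite_imp_inj_to_nat_seg[OF \<open>finite V\<close>] by blast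
  define c where "c u \<longleftrightarrow> (\<exists>v\<in>V. E u v \<and> f v < f u)" for u
  have "c u \<noteq> c v" if uv: "u \<in> V" "v \<in> V" "E u v" "f v < f u" for u v
  proof -
    have "c u" using uv by (auto simp: c_def)
    moreover have "\<not> c v"
    proof
      assume "c v"
      then obtain v' where "v' \<in> V" "E v v'" "f v' < f v" by (auto simp: c_def)
      moreover have "v' = u" using matching[OF uv(2) \<open>v' \<in> V\<close> uv(1) \<open>E v v'\<close> sym[OF uv(1-3)]] .
      ultimately show False using uv(4) by simp
    qed
    ultimately show ?thesis by blast
  qed
  moreover have "f u \<noteq> f v" if "u \<in> V" "v \<in> V" "E u v" for u v
    using that irrefl inj_onD[OF f] by metis
  ultimately have "c u \<noteq> c v" if "u \<in> V" "v \<in> V" "E u v" for u v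
    using that sym by (metis linorder_neqE_nat)
  thus ?thesis by blast
qed

lemma chromatic_number_le_matching_classes:
  fixes V :: "'v set" and I :: "'i set" and cls :: "'i \<Rightarrow> 'v \<Rightarrow> bool"
  assumes "finite V" and "finite I"
    and sym: "\<And>u v. u \<in> V \<Longrightarrow> v \<in> V \<Longrightarrow> E u v \<Longrightarrow> E v u"
    and irrefl: "\<And>v. v \<in> V \<Longrightarrow> \<not> E v v"
    and matching: "\<And>k u v v'. k \<in> I \<Longrightarrow> u \<in> V \<Longrightarrow> v \<in> V \<Longrightarrow> v' \<in> V \<Longrightarrow>
        cls k u \<Longrightarrow> cls k v \<Longrightarrow> cls k v' \<Longrightarrow> E u v \<Longrightarrow> E u v' \<Longrightarrow> v = v'"
    and independent: "\<And>u v. u \<in> V \<Longrightarrow> v \<in> V \<Longrightarrow>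
        \<forall>k\<in>I. \<not> cls k u \<Longrightarrow> \<forall>k\<in>I. \<not> cls k v \<Longrightarrow> \<not> E u v"
  shows "chromatic_number V E \<le> 2 * card I + 1"
proof -
  have "\<exists>c :: 'v \<Rightarrow> bool. \<forall>u\<in>V. \<forall>v\<in>V. E u v \<and> cls k u \<and> cls k v \<longrightarrow> c u \<noteq> c v"
    if "k \<in> I" for k
    by (rule matching_two_colouring[OF \<open>finite V\<close>]) (use sym irrefl matching[OF that] in blast)+
  then obtain bit :: "'i \<Rightarrow> 'v \<Rightarrow> bool" where bit: "\<And>k u v. k \<in> I \<Longrightarrow> u \<in> V \<Longrightarrow> v \<in> V \<Longrightarrow>
      E u v \<Longrightarrow> cls k u \<Longrightarrow> cls k v \<Longrightarrow> bit k u \<noteq> bit k v"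
    by metis
  obtain code where code: "bij_betw code I {0..<card I}"
    using ex_bij_betw_finite_nat[OF \<open>finite I\<close>] by blast
  define covered where "covered u \<longleftrightarrow> (\<exists>k\<in>I. cls k u)" for u
  define cl where "cl u = (SOME k. k \<in> I \<and> cls k u)" for u
  have cl: "cl u \<in> I" "cls (cl u) u" if "covered u" for u
    using someI_ex[of "\<lambda>k. k \<in> I \<and> cls k u"] that by (auto simp: covered_def cl_def)
  define colour where "colour u =
    (if covered u then 2 * code (cl u) + (if bit (cl u) u then 1 else 0) else 2 * card I)" for u
  have code_lt: "code k < card I" if "k \<in> I" for k
    using code that by (auto simp: bij_betw_def)
  have colour_lt: "colour u < 2 * card I" if "covered u" for u
    using code_lt[OF cl(1)[OF that]] that by (simp add: colour_def)
  have colour_uncovered: "colour u = 2 * card I" if "\<not> covered u" for u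
    using that by (simp add: colour_def)
  have "colour u \<noteq> colour v" if uv: "u \<in> V" "v \<in> V" "E u v" for u v
  proof (cases "covered u \<and> covered v")
    case True
    show ?thesis
    proof
      assume "colour u = colour v"
      hence "code (cl u) = code (cl v)" and bits: "bit (cl u) u = bit (cl v) v"
        using True by (auto simp: colour_def split: if_splits; presburger)+
      hence "cl u = cl v"
        using code cl True by (metis bij_betw_imp_inj_on inj_onD)
      thus False using bit[OF cl(1) uv cl(2)] bits cl(2) True by metis
    qed
  next
    case False
    show ?thesis
    proof (cases "covered u \<or> covered v")
      case True
      thus ?thesis using False colour_lt colour_uncovered by (metis less_irrefl)
    next
      case False
      thus ?thesis using independent[OF uv(1,2)] uv(3) by (auto simp: covered_def)
    qed
  qed
  moreover have "colour u < 2 * card I + 1" for u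
    using colour_lt[of u] colour_uncovered[of u] by linarith
  ultimately show ?thesis by (intro chromatic_number_le[where c = colour]) blast+
qed

section \<open>Vectors in \<open>F\<^sup>3\<close>\<close>

lemma scal3_simp [simp]: "scal3 c (x, y, z) = (c * x, c * y, c * z)"
  by (simp add: scal3_def)

lemma dot3_simp [simp]: "dot3 (x0, x1, x2) (y0, y1, y2) = x0 * y0 + x1 * y1 + x2 * y2"
  by (simp add: dot3_def)

lemma scal3_scal3 [simp]: "scal3 c (scal3 l v) = scal3 (c * l) v"
  by (cases v) (simp add: algebra_simps)

lemma scal3_1 [simp]: "scal3 1 v = v"
  by (cases v) simp

lemma scal3_0 [simp]: "scal3 0 v = (0, 0, 0)"
  by (cases v) simp

lemma dot3_commute: "dot3 u v = dot3 v u"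
  by (cases u; cases v) (simp add: algebra_simps)

fun cross3 :: "'a::field \<times> 'a \<times> 'a \<Rightarrow> 'a \<times> 'a \<times> 'a \<Rightarrow> 'a \<times> 'a \<times> 'a" where
  "cross3 (a1, a2, a3) (b1, b2, b3) = (a2*b3 - a3*b2, a3*b1 - a1*b3, a1*b2 - a2*b1)"

lemma cross3_eq_0_commute: "cross3 u v = (0, 0, 0) \<longleftrightarrow> cross3 v u = (0, 0, 0)"
  by (cases u; cases v) (auto simp: algebra_simps)

lemma cross3_scal3_scal3: "cross3 (scal3 l u) (scal3 m u) = (0, 0, 0)"
  by (cases u) (simp add: algebra_simps)

lemma cross3_eq_0_imp_scal3:
  assumes "cross3 a c = (0, 0, 0)" and "c \<noteq> (0, 0, 0)"
  shows "\<exists>l. a = scal3 l c"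
proof -
  obtain a1 a2 a3 c1 c2 c3 where a: "a = (a1, a2, a3)" and c: "c = (c1, c2, c3)"
    by (cases a, cases c)
  from assms a c have e1: "a2*c3 = a3*c2" and e2: "a3*c1 = a1*c3" and e3: "a1*c2 = a2*c1"
    by auto
  consider "c1 \<noteq> 0" | "c1 = 0" "c2 \<noteq> 0" | "c1 = 0" "c2 = 0" "c3 \<noteq> 0"
    using assms(2) c by auto
  then show ?thesis
  proof cases
    case 1
    show ?thesis by (rule exI[of _ "a1/c1"]) (use 1 e2 e3 in \<open>auto simp: a c field_simps\<close>)
  next
    case 2
    show ?thesis by (rule exI[of _ "a2/c2"]) (use 2 e1 e3 in \<open>auto simp: a c field_simps\<close>)
  next
    case 3
    show ?thesis by (rule exI[of _ "a3/c3"]) (use 3 e1 e2 in \<open>auto simp: a c field_simps\<close>)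
  qed
qed

lemma cross3_linear_image:
  assumes linear: "\<And>l u. F (scal3 l u) = scal3 l (F u)" and "cross3 u w = (0, 0, 0)"
  shows "cross3 (F u) (F w) = (0, 0, 0)"
proof (cases "w = (0, 0, 0)")
  case True
  have "F w = (0, 0, 0)" using linear[of 0 w] True by simp
  thus ?thesis by (cases "F u") simp
next
  case False
  then obtain l where "u = scal3 l w" using cross3_eq_0_imp_scal3 assms(2) by blast
  thus ?thesis using linear cross3_scal3_scal3[of l "F w" 1] by simp
qed

lemma cross3_dot3_orthogonal:
  assumes "dot3 x u = 0" and "dot3 x w = 0"
  shows "cross3 x (cross3 u w) = (0, 0, 0)"
proof -
  obtain x1 x2 x3 u1 u2 u3 w1 w2 w3 where x: "x = (x1, x2, x3)" and u: "u = (u1, u2, u3)"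
    and w: "w = (w1, w2, w3)"
    by (cases x, cases u, cases w)
  have "cross3 x (cross3 u w) = (u1 * dot3 x w - w1 * dot3 x u,
      u2 * dot3 x w - w2 * dot3 x u, u3 * dot3 x w - w3 * dot3 x u)"
    by (simp add: x u w algebra_simps)
  thus ?thesis using assms by simp
qed

section \<open>The discriminant form of quadratic polynomials\<close>

fun disc_polar :: "'a::field \<times> 'a \<times> 'a \<Rightarrow> 'a \<times> 'a \<times> 'a \<Rightarrow> 'a" where
  "disc_polar (a1, b1, c1) (a2, b2, c2) = b1*b2 - 2*(a1*c2 + a2*c1)"

lemma disc_polar_commute: "disc_polar Q R = disc_polar R Q"
  by (cases Q; cases R) (simp add: algebra_simps)

lemma disc_polar_orthogonal_plane:
  fixes a b u w :: "'a::field \<times> 'a \<times> 'a"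
  assumes two: "(2::'a) \<noteq> 0"
    and "disc_polar a u = 0" "disc_polar a w = 0" "disc_polar b u = 0" "disc_polar b w = 0"
    and uw: "cross3 u w \<noteq> (0, 0, 0)"
  shows "cross3 a b = (0, 0, 0)"
proof -
  define J :: "'a \<times> 'a \<times> 'a \<Rightarrow> 'a \<times> 'a \<times> 'a" where "J = (\<lambda>(x1, x2, x3). (-2*x3, x2, -2*x1))"
  define J' :: "'a \<times> 'a \<times> 'a \<Rightarrow> 'a \<times> 'a \<times> 'a" where "J' = (\<lambda>(y1, y2, y3). (-y3/2, y2, -y1/2))"
  have J: "disc_polar x y = dot3 (J x) y" for x y
    by (cases x; cases y) (simp add: J_def algebra_simps)
  have J'J: "J' (J x) = x" for x
    using two by (cases x) (simp add: J_def J'_def)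
  have J'_linear: "J' (scal3 l y) = scal3 l (J' y)" for l y
    by (cases y) (simp add: J'_def)
  obtain l where l: "J a = scal3 l (cross3 u w)"
    using cross3_eq_0_imp_scal3[OF cross3_dot3_orthogonal uw] assms(2,3) J by metis
  obtain m where m: "J b = scal3 m (cross3 u w)"
    using cross3_eq_0_imp_scal3[OF cross3_dot3_orthogonal uw] assms(4,5) J by metis
  have "cross3 (J a) (J b) = (0, 0, 0)"
    unfolding l m by (rule cross3_scal3_scal3)
  from cross3_linear_image[OF J'_linear this] show ?thesis by (simp add: J'J)
qed

text \<open>The coefficients of \<open>Q(dX + c)\<close>.\<close>
fun subst_affine :: "'a::field \<Rightarrow> 'a \<Rightarrow> 'a \<times> 'a \<times> 'a \<Rightarrow> 'a \<times> 'a \<times> 'a" where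
  "subst_affine d c (a, b, g) = (a*d*d, d*(2*a*c + b), a*c*c + b*c + g)"

lemma disc_polar_subst_affine:
  "disc_polar (subst_affine d c Q) (subst_affine d c R) = d*d * disc_polar Q R"
  by (cases Q; cases R) (simp add: algebra_simps)

lemma subst_affine_subst_affine:
  "subst_affine d' c' (subst_affine d c Q) = subst_affine (d*d') (d*c' + c) Q"
  by (cases Q) (simp add: algebra_simps)

lemma subst_affine_1_0 [simp]: "subst_affine 1 0 Q = Q"
  by (cases Q) simp

lemma subst_affine_inverse:
  "d \<noteq> 0 \<Longrightarrow> subst_affine (1/d) (- (c/d)) (subst_affine d c Q) = Q"
  by (simp add: subst_affine_subst_affine)

lemma subst_affine_scal3: "subst_affine d c (scal3 l Q) = scal3 l (subst_affine d c Q)"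
  by (cases Q) (simp add: algebra_simps)

lemma subst_affine_eq_0_iff:
  "d \<noteq> 0 \<Longrightarrow> subst_affine d c Q = (0, 0, 0) \<longleftrightarrow> Q = (0, 0, 0)"
  by (metis subst_affine_inverse scal3_0 subst_affine_scal3)

lemma cross3_subst_affine:
  assumes "d \<noteq> 0" and "cross3 (subst_affine d c u) (subst_affine d c w) = (0, 0, 0)"
  shows "cross3 u w = (0, 0, 0)"
  using cross3_linear_image[where F = "subst_affine (1/d) (- (c/d))", OF subst_affine_scal3 assms(2)]
  by (simp add: subst_affine_inverse[OF assms(1)])

fun to_disc :: "'a::field \<Rightarrow> 'a \<times> 'a \<times> 'a \<Rightarrow> 'a \<times> 'a \<times> 'a" where
  "to_disc i (v0, v1, v2) = ((v1 + i*v2) / 2, v0, (i*v2 - v1) / 2)"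

fun from_disc :: "'a::field \<Rightarrow> 'a \<times> 'a \<times> 'a \<Rightarrow> 'a \<times> 'a \<times> 'a" where
  "from_disc i (a, b, g) = (b, a - g, -i*(a + g))"

lemma from_disc_scal3: "from_disc i (scal3 l v) = scal3 l (from_disc i v)"
  by (cases v) (simp add: algebra_simps)

context
  fixes i :: "'a::field"
  assumes two: "(2::'a) \<noteq> 0" and i: "i * i = -1"
begin

text \<open>Naming \<open>1/2\<close> as an atom \<open>h\<close> with \<open>h * 2 = 1\<close> lets the Groebner basis method work without
  knowing \<open>2 \<noteq> 0\<close>; the method is called by its qualified name because HOL-Algebra shadows
  \<open>algebra\<close>.\<close>
lemma exists_half: "\<exists>h. h * 2 = 1 \<and> (\<forall>x. x / 2 = x * (h::'a))"
  using left_inverse[OF two] divide_inverse by blast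

lemma disc_polar_to_disc: "disc_polar (to_disc i v) (to_disc i w) = dot3 v w"
proof -
  obtain v0 v1 v2 w0 w1 w2 where v: "v = (v0, v1, v2)" and w: "w = (w0, w1, w2)"
    by (cases v, cases w)
  obtain h :: 'a where h: "h * 2 = 1" and half: "\<And>x. x / 2 = x * h"
    using exists_half by blast
  show ?thesis
    by (simp only: v w to_disc.simps disc_polar.simps dot3_simp half)
      (use i h in Groebner_Basis.algebra)
qed

lemma from_disc_to_disc [simp]: "from_disc i (to_disc i v) = v"
proof -
  obtain v0 v1 v2 where v: "v = (v0, v1, v2)"
    by (cases v)
  obtain h :: 'a where h: "h * 2 = 1" and half: "\<And>x. x / 2 = x * h"
    using exists_half by blast
  have "(v1 + i*v2) * h - (i*v2 - v1) * h = v1" and "-i * ((v1 + i*v2) * h + (i*v2 - v1) * h) = v2"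
    using i h by Groebner_Basis.algebra+
  then show ?thesis
    by (simp only: v to_disc.simps from_disc.simps half)
qed

lemma to_disc_eq_0_iff: "to_disc i v = (0, 0, 0) \<longleftrightarrow> v = (0, 0, 0)"
proof
  assume "to_disc i v = (0, 0, 0)"
  then have "from_disc i (to_disc i v) = (0, 0, 0)" by simp
  thus "v = (0, 0, 0)" by (simp only: from_disc_to_disc)
qed simp

lemma cross3_to_disc:
  assumes "cross3 (to_disc i u) (to_disc i v) = (0, 0, 0)"
  shows "cross3 u v = (0, 0, 0)"
  using cross3_linear_image[where F = "from_disc i", OF from_disc_scal3 assms]
  by (simp only: from_disc_to_disc)

end

section \<open>Points of \<open>PG(2, F)\<close>\<close>

definition rep :: "('a::field \<times> 'a \<times> 'a) set \<Rightarrow> 'a \<times> 'a \<times> 'a" where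
  "rep L = (SOME v. v \<noteq> (0, 0, 0) \<and> L = range (\<lambda>c. scal3 c v))"

lemma rep_PG2_points:
  assumes "L \<in> PG2_points"
  shows "rep L \<noteq> (0, 0, 0)" and "L = range (\<lambda>c. scal3 c (rep L))"
proof -
  have "\<exists>v. v \<noteq> (0, 0, 0) \<and> L = range (\<lambda>c. scal3 c v)"
    using assms by (simp add: PG2_points_def)
  then have "rep L \<noteq> (0, 0, 0) \<and> L = range (\<lambda>c. scal3 c (rep L))"
    unfolding rep_def by (rule someI_ex)
  thus "rep L \<noteq> (0, 0, 0)" and "L = range (\<lambda>c. scal3 c (rep L))"
    by blast+
qed

lemma rep_in_point: "L \<in> PG2_points \<Longrightarrow> rep L \<in> L"
  using rep_PG2_points(2)[of L] scal3_1[of "rep L"] by (metis rangeI)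

lemma ER_adj_commute: "ER_adj L M \<longleftrightarrow> ER_adj M L"
  unfolding ER_adj_def using dot3_commute by metis

lemma ER_adj_imp_dot3_rep:
  "ER_adj L M \<Longrightarrow> L \<in> PG2_points \<Longrightarrow> M \<in> PG2_points \<Longrightarrow> dot3 (rep L) (rep M) = 0"
  unfolding ER_adj_def using rep_in_point by blast

lemma PG2_points_eqI:
  assumes L: "L \<in> PG2_points" and M: "M \<in> PG2_points"
    and "cross3 (rep L) (rep M) = (0, 0, 0)"
  shows "L = M"
proof -
  obtain l where l: "rep L = scal3 l (rep M)"
    using cross3_eq_0_imp_scal3 assms(3) rep_PG2_points(1)[OF M] by blast
  have "l \<noteq> 0" using rep_PG2_points(1)[OF L] l by auto
  have "range (\<lambda>c. scal3 c (rep L)) = range (\<lambda>c. scal3 c (rep M))"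
  proof (intro equalityI subsetI)
    fix x assume "x \<in> range (\<lambda>c. scal3 c (rep L))"
    thus "x \<in> range (\<lambda>c. scal3 c (rep M))" by (auto simp: l)
  next
    fix x assume "x \<in> range (\<lambda>c. scal3 c (rep M))"
    then obtain c where "x = scal3 c (rep M)" by blast
    hence "x = scal3 (c / l) (rep L)" using \<open>l \<noteq> 0\<close> by (simp add: l)
    thus "x \<in> range (\<lambda>c. scal3 c (rep L))" by blast
  qed
  thus ?thesis using rep_PG2_points(2) L M by metis
qed

section \<open>Involutive automorphisms of a finite field\<close>

lemma card_eq_twice_card_squares:
  fixes A :: "'a::field set"
  assumes "finite A" and "(2::'a) \<noteq> 0" and "\<And>x. x \<in> A \<Longrightarrow> -x \<in> A" and "0 \<notin> A"
  shows "card A = 2 * card ((\<lambda>z. z * z) ` A)"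
proof -
  let ?fibre = "\<lambda>y. {x \<in> A. x * x = y}"
  have "?fibre (z * z) = {z, -z}" if "z \<in> A" for z
    using that assms(3) by (auto simp: square_eq_iff)
  moreover have "z \<noteq> -z" if "z \<in> A" for z
    using that assms(2,4) by (metis add_eq_0_iff mult_2 mult_eq_0_iff minus_equation_iff)
  ultimately have card_fibre: "card (?fibre y) = 2" if "y \<in> (\<lambda>z. z * z) ` A" for y
    using that by auto
  have "card A = card (\<Union>y\<in>(\<lambda>z. z * z) ` A. ?fibre y)"
    by (rule arg_cong[where f = card]) auto
  also have "\<dots> = (\<Sum>y\<in>(\<lambda>z. z * z) ` A. card (?fibre y))"
    using assms(1) by (intro card_UN_disjoint) auto
  also have "\<dots> = 2 * card ((\<lambda>z. z * z) ` A)"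
    using card_fibre by simp
  finally show ?thesis .
qed

lemma quadratic_formula_root:
  fixes X Y Z z :: "'a::field"
  assumes "(2::'a) \<noteq> 0" and "X \<noteq> 0" and "z * z = Y * Y - 4 * X * Z"
    and t: "t = (z - Y) / (2 * X)"
  shows "X * t * t + Y * t + Z = 0"
proof -
  have z: "z = 2 * X * t + Y" using t assms(1,2) by (simp add: field_simps)
  have "(2 * 2 * X) * (X * t * t + Y * t + Z) = 0"
    using assms(3) unfolding z by (simp add: algebra_simps)
  thus ?thesis using assms(1,2) by (metis mult_eq_0_iff)
qed

locale involutive_field_automorphism =
  fixes \<sigma> :: "'a::{field, finite} \<Rightarrow> 'a"
  assumes hom_add: "\<sigma> (x + y) = \<sigma> x + \<sigma> y"
    and hom_mult: "\<sigma> (x * y) = \<sigma> x * \<sigma> y"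
    and involution: "\<sigma> (\<sigma> x) = x"
    and nontrivial: "\<exists>x. \<sigma> x \<noteq> x"
    and two: "(2::'a) \<noteq> 0"
begin

lemma hom_zero [simp]: "\<sigma> 0 = 0"
proof -
  have "\<sigma> 0 + \<sigma> 0 = \<sigma> 0 + 0" using hom_add[of 0 0] by simp
  thus ?thesis by (rule add_left_imp_eq)
qed

lemma hom_one [simp]: "\<sigma> 1 = 1"
proof -
  have "\<sigma> 1 \<noteq> 0" using involution[of 1] by auto
  thus ?thesis using hom_mult[of 1 1] by simp
qed

lemma hom_uminus [simp]: "\<sigma> (- x) = - \<sigma> x"
  using hom_add[of x "- x"] by (simp add: eq_neg_iff_add_eq_0 add.commute)

lemma hom_diff [simp]: "\<sigma> (x - y) = \<sigma> x - \<sigma> y"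
  using hom_add[of x "- y"] by simp

lemma hom_inverse [simp]: "\<sigma> (inverse x) = inverse (\<sigma> x)"
proof (cases "x = 0")
  case False
  hence "\<sigma> x * \<sigma> (inverse x) = 1" by (simp flip: hom_mult)
  thus ?thesis by (simp add: inverse_unique)
qed simp

lemma hom_divide [simp]: "\<sigma> (x / y) = \<sigma> x / \<sigma> y"
  by (simp add: divide_inverse hom_mult)

lemma hom_of_nat [simp]: "\<sigma> (of_nat n) = of_nat n"
  by (induction n) (simp_all add: hom_add)

lemma hom_numeral [simp]: "\<sigma> (numeral n) = numeral n"
  using hom_of_nat[of "numeral n"] by simp

lemma hom_eq_0_iff [simp]: "\<sigma> x = 0 \<longleftrightarrow> x = 0"
  by (metis hom_zero involution)

declare hom_add [simp] hom_mult [simp] involution [simp]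

definition fixed_field :: "'a set" where
  "fixed_field = {x. \<sigma> x = x}"

lemma exists_anti_fixed: "\<exists>w. w \<noteq> 0 \<and> \<sigma> w = - w"
proof -
  obtain x where "\<sigma> x \<noteq> x" using nontrivial by blast
  thus ?thesis by (intro exI[of _ "x - \<sigma> x"]) auto
qed

text \<open>The square classes of the fixed field \<open>K\<close>: if \<open>\<sigma> w = -w \<noteq> 0\<close>, then \<open>w\<^sup>2 \<in> K\<close> is not a
  square in \<open>K\<close>, and the nonzero squares have index two in \<open>K\<^sup>*\<close>.\<close>
lemma fixed_square_or_twisted_square:
  assumes w: "w \<noteq> 0" "\<sigma> w = - w" and D: "\<sigma> D = D"
  shows "\<exists>z. \<sigma> z = z \<and> (z * z = D \<or> z * z = w * w * D)"
proof (cases "D = 0")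
  case False
  define K0 where "K0 = fixed_field - {0}"
  define S where "S = (\<lambda>z. z * z) ` K0"
  define T where "T = (\<lambda>y. w * w * y) ` S"
  have SK: "S \<subseteq> K0" and TK: "T \<subseteq> K0"
    using w by (auto simp: S_def T_def K0_def fixed_field_def)
  have "card K0 = 2 * card S"
    unfolding S_def by (rule card_eq_twice_card_squares) (auto simp: K0_def fixed_field_def two)
  moreover have "card T = card S"
    unfolding T_def using w by (intro card_image inj_onI) simp
  moreover have "S \<inter> T = {}"
  proof (rule ccontr)
    assume "S \<inter> T \<noteq> {}"
    then obtain z1 z2 where z: "z1 \<in> K0" "z2 \<in> K0" "z1 * z1 = w * w * (z2 * z2)"
      by (auto simp: S_def T_def)
    define k where "k = z1 / z2"
    have "\<sigma> k = k" using z by (simp add: k_def K0_def fixed_field_def)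
    moreover have "k * k = w * w" using z by (simp add: k_def K0_def field_simps)
    ultimately have "\<sigma> w = w" by (metis square_eq_iff hom_uminus involution)
    thus False using w two by (metis add_eq_0_iff mult_2 mult_eq_0_iff minus_equation_iff)
  qed
  ultimately have "card (S \<union> T) = card K0"
    using finite_subset[OF SK] finite_subset[OF TK] by (simp add: card_Un_disjoint)
  hence "S \<union> T = K0"
    using SK TK by (intro card_subset_eq) auto
  moreover have "D \<in> K0" using False D by (simp add: K0_def fixed_field_def)
  ultimately have "D \<in> S \<or> D \<in> T" by blast
  then consider z where "z \<in> K0" "D = z * z" | z where "z \<in> K0" "D = w * w * (z * z)"
    by (auto simp: S_def T_def)
  thus ?thesis
  proof cases
    case 1 thus ?thesis by (auto simp: K0_def fixed_field_def)
  next
    case 2 thus ?thesis using w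
      by (intro exI[of _ "w * w * z"]) (auto simp: K0_def fixed_field_def algebra_simps)
  qed
qed (intro exI[of _ 0]; simp)

lemma exists_sqrt_minus_one: "\<exists>i::'a. i * i = -1"
proof -
  obtain w where w: "w \<noteq> 0" "\<sigma> w = - w" using exists_anti_fixed by blast
  obtain z where "z * z = -1 \<or> z * z = w * w * (-1)"
    using fixed_square_or_twisted_square[OF w, of "-1"] by auto
  thus ?thesis
  proof
    assume "z * z = w * w * (-1)"
    hence "(z / w) * (z / w) = -1" using w by (simp add: field_simps)
    thus ?thesis by (rule exI)
  qed blast
qed

definition conj3 :: "'a \<times> 'a \<times> 'a \<Rightarrow> 'a \<times> 'a \<times> 'a" where
  "conj3 = map_prod \<sigma> (map_prod \<sigma> \<sigma>)"

lemma conj3_simp [simp]: "conj3 (x, y, z) = (\<sigma> x, \<sigma> y, \<sigma> z)"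
  by (simp add: conj3_def)

lemma conj3_conj3 [simp]: "conj3 (conj3 v) = v"
  by (cases v) simp

lemma conj3_eq_0_iff [simp]: "conj3 v = (0, 0, 0) \<longleftrightarrow> v = (0, 0, 0)"
  by (cases v) simp

lemma disc_polar_conj3: "disc_polar (conj3 Q) (conj3 R) = \<sigma> (disc_polar Q R)"
  by (cases Q; cases R) simp

lemma cross3_conj3: "cross3 (conj3 u) (conj3 v) = conj3 (cross3 u v)"
  by (cases u; cases v) simp

definition conj_isotropic :: "'a \<times> 'a \<times> 'a \<Rightarrow> bool" where
  "conj_isotropic Q \<longleftrightarrow> disc_polar Q (conj3 Q) = 0"

text \<open>Among the \<open>\<sigma>\<close>-isotropic points, the only one orthogonal to \<open>Q\<close> is \<open>\<sigma>(Q)\<close>: \<open>Q\<close> and \<open>\<sigma>(R)\<close> are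
  both orthogonal to the plane spanned by \<open>\<sigma>(Q)\<close> and \<open>R\<close>.\<close>
lemma conj_isotropic_orthogonal_parallel:
  assumes Q: "conj_isotropic Q" and R: "conj_isotropic R" and QR: "disc_polar Q R = 0"
  shows "cross3 (conj3 Q) R = (0, 0, 0)"
proof (rule ccontr)
  assume nz: "cross3 (conj3 Q) R \<noteq> (0, 0, 0)"
  have "disc_polar (conj3 R) (conj3 Q) = 0"
    using QR by (simp add: disc_polar_conj3 disc_polar_commute)
  then have "cross3 Q (conj3 R) = (0, 0, 0)"
    using disc_polar_orthogonal_plane[OF two _ QR _ _ nz] Q R
    by (simp add: conj_isotropic_def disc_polar_commute)
  then have "cross3 (conj3 Q) R = (0, 0, 0)"
    using cross3_conj3[of Q "conj3 R"] by simp
  thus False using nz by simp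
qed

definition in_class :: "'a \<Rightarrow> 'a \<Rightarrow> 'a \<times> 'a \<times> 'a \<Rightarrow> bool" where
  "in_class d c Q \<longleftrightarrow> conj_isotropic (subst_affine d c Q)"

lemma in_class_orthogonal_parallel:
  assumes "d \<noteq> 0" and "Q \<noteq> (0, 0, 0)"
    and "in_class d c Q" "in_class d c R1" "in_class d c R2"
    and "disc_polar Q R1 = 0" "disc_polar Q R2 = 0"
  shows "cross3 R1 R2 = (0, 0, 0)"
proof -
  let ?S = "subst_affine d c"
  have nz: "conj3 (?S Q) \<noteq> (0, 0, 0)"
    using assms(1,2) by (simp add: subst_affine_eq_0_iff)
  have "cross3 (?S R) (conj3 (?S Q)) = (0, 0, 0)"
    if "in_class d c R" "disc_polar Q R = 0" for R
    using conj_isotropic_orthogonal_parallel[of "?S Q" "?S R"] assms(3) that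
    by (simp add: in_class_def disc_polar_subst_affine cross3_eq_0_commute)
  then obtain l m where "?S R1 = scal3 l (conj3 (?S Q))" and "?S R2 = scal3 m (conj3 (?S Q))"
    using cross3_eq_0_imp_scal3[OF _ nz] assms(4-7) by metis
  then have "cross3 (?S R1) (?S R2) = (0, 0, 0)"
    by (simp add: cross3_scal3_scal3)
  thus ?thesis by (rule cross3_subst_affine[OF assms(1)])
qed

lemma in_class_const: "in_class d c (0, 0, g)"
  by (simp add: in_class_def conj_isotropic_def)

text \<open>For \<open>t\<close> in the fixed field, both isotropy conditions below are quadratic equations in \<open>t\<close> with
  coefficients in the fixed field, and their discriminants differ by the non-square factor
  \<open>w\<^sup>2\<close>; so one of them has a root in the fixed field.\<close>
lemma in_class_cover:
  assumes w: "w \<noteq> 0" "\<sigma> w = - w" and "a \<noteq> 0"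
  shows "\<exists>t\<in>fixed_field. in_class 1 (w * t) (a, b, g) \<or> in_class w t (a, b, g)"
proof -
  define A where "A = 8 * a * \<sigma> a"
  define B where "B = 4 * (a * \<sigma> b + \<sigma> a * b)"
  define C where "C = b * \<sigma> b + 2 * (a * \<sigma> g + \<sigma> a * g)"
  define A' where "A' = - 8 * w * w * a * \<sigma> a"
  define B' where "B' = 4 * w * (a * \<sigma> b - \<sigma> a * b)"
  define C' where "C' = b * \<sigma> b - 2 * (a * \<sigma> g + \<sigma> a * g)"
  define D where "D = B * B - 4 * A * C"
  have fixed: "\<sigma> A = A" "\<sigma> B = B" "\<sigma> A' = A'" "\<sigma> B' = B'" "\<sigma> D = D"
    using w by (simp_all add: A_def B_def C_def A'_def B'_def D_def algebra_simps)
  have eight: "(8::'a) \<noteq> 0"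
    using two by (metis mult_eq_0_iff numeral_times_numeral semiring_norm(12,13))
  have "A \<noteq> 0" and "A' \<noteq> 0"
    using w \<open>a \<noteq> 0\<close> eight by (simp_all add: A_def A'_def)
  have isotropic_w: "in_class w t (a, b, g) \<longleftrightarrow> A * t * t + B * t + C = 0" if "\<sigma> t = t" for t
  proof -
    have "disc_polar (subst_affine w t (a, b, g)) (conj3 (subst_affine w t (a, b, g)))
        = - (w * w) * (A * t * t + B * t + C)"
      using that w by (simp add: A_def B_def C_def algebra_simps)
    thus ?thesis using w by (simp add: in_class_def conj_isotropic_def)
  qed
  have isotropic_1: "in_class 1 (w * t) (a, b, g) \<longleftrightarrow> A' * t * t + B' * t + C' = 0"
    if "\<sigma> t = t" for t
    using that w by (simp add: in_class_def conj_isotropic_def A'_def B'_def C'_def algebra_simps)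
  obtain z where "\<sigma> z = z" and "z * z = D \<or> z * z = w * w * D"
    using fixed_square_or_twisted_square[OF w fixed(5)] by blast
  then consider "z * z = B * B - 4 * A * C" | "z * z = B' * B' - 4 * A' * C'"
    by (auto simp: D_def A_def B_def C_def A'_def B'_def C'_def algebra_simps)
  then show ?thesis
  proof cases
    case 1
    define t where "t = (z - B) / (2 * A)"
    have "\<sigma> t = t" using \<open>\<sigma> z = z\<close> fixed by (simp add: t_def)
    moreover have "A * t * t + B * t + C = 0"
      using quadratic_formula_root[OF two \<open>A \<noteq> 0\<close> 1 t_def] .
    ultimately show ?thesis using isotropic_w by (auto simp: fixed_field_def)
  next
    case 2
    define t where "t = (z - B') / (2 * A')"
    have "\<sigma> t = t" using \<open>\<sigma> z = z\<close> fixed by (simp add: t_def)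
    moreover have "A' * t * t + B' * t + C' = 0"
      using quadratic_formula_root[OF two \<open>A' \<noteq> 0\<close> 2 t_def] .
    ultimately show ?thesis using isotropic_1 by (auto simp: fixed_field_def)
  qed
qed

definition uncovered :: "'a \<Rightarrow> 'a \<times> 'a \<times> 'a \<Rightarrow> bool" where
  "uncovered w Q \<longleftrightarrow> (\<forall>t\<in>fixed_field. \<not> in_class 1 (w * t) Q \<and> \<not> in_class w t Q)"

lemma uncovered_shape:
  assumes "w \<noteq> 0" "\<sigma> w = - w" and "uncovered w Q"
  obtains b g where "Q = (0, b, g)" and "b \<noteq> 0"
proof -
  obtain a b g where Q: "Q = (a, b, g)" by (cases Q)
  have "a = 0"
  proof (rule ccontr)
    assume "a \<noteq> 0"
    then obtain t where "t \<in> fixed_field" "in_class 1 (w * t) Q \<or> in_class w t Q"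
      using in_class_cover[OF assms(1,2)] Q by blast
    thus False using assms(3) by (simp add: uncovered_def)
  qed
  moreover have "b \<noteq> 0"
  proof
    assume "b = 0"
    hence "in_class w 0 Q" using \<open>a = 0\<close> Q by (simp add: in_class_const)
    moreover have "0 \<in> fixed_field" by (simp add: fixed_field_def)
    ultimately show False using assms(3) by (simp add: uncovered_def)
  qed
  ultimately show ?thesis using Q that by blast
qed

lemma disc_polar_uncovered:
  assumes "w \<noteq> 0" "\<sigma> w = - w" and "uncovered w Q" "uncovered w R"
  shows "disc_polar Q R \<noteq> 0"
proof -
  obtain b g b' g' where "Q = (0, b, g)" "R = (0, b', g')" "b \<noteq> 0" "b' \<noteq> 0"
    using uncovered_shape[OF assms(1,2,3)] uncovered_shape[OF assms(1,2,4)] by metis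
  thus ?thesis by simp
qed

lemma ER_adj_in_class_unique:
  assumes "i * i = -1" and "d \<noteq> 0"
    and L: "L \<in> PG2_points" and M: "M \<in> PG2_points" "M' \<in> PG2_points"
    and "in_class d c (to_disc i (rep L))"
      "in_class d c (to_disc i (rep M))" "in_class d c (to_disc i (rep M'))"
    and "ER_adj L M" "ER_adj L M'"
  shows "M = M'"
proof -
  have "to_disc i (rep L) \<noteq> (0, 0, 0)"
    using rep_PG2_points(1)[OF L] to_disc_eq_0_iff[OF two assms(1)] by simp
  moreover have "disc_polar (to_disc i (rep L)) (to_disc i (rep N)) = 0"
    if "N \<in> PG2_points" "ER_adj L N" for N
    using that L by (simp add: disc_polar_to_disc[OF two assms(1)] ER_adj_imp_dot3_rep)
  ultimately have "cross3 (to_disc i (rep M)) (to_disc i (rep M')) = (0, 0, 0)"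
    using assms(2,6-10) M by (intro in_class_orthogonal_parallel) simp_all
  then show ?thesis
    using M by (intro PG2_points_eqI) (simp_all add: cross3_to_disc[OF two assms(1)])
qed

lemma ER_adj_uncovered:
  assumes "w \<noteq> 0" "\<sigma> w = - w" and "i * i = -1"
    and "L \<in> PG2_points" "M \<in> PG2_points"
    and "uncovered w (to_disc i (rep L))" "uncovered w (to_disc i (rep M))"
  shows "\<not> ER_adj L M"
  using disc_polar_uncovered[OF assms(1,2,6,7)] ER_adj_imp_dot3_rep[OF _ assms(4,5)]
  by (auto simp: disc_polar_to_disc[OF two assms(3)])

theorem chromatic_number_ER_le:
  "chromatic_number (PG2_points :: ('a \<times> 'a \<times> 'a) set set) ER_adj \<le> 4 * card fixed_field + 1"
proof -
  obtain w where w: "w \<noteq> 0" "\<sigma> w = - w" using exists_anti_fixed by blast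
  obtain i :: 'a where i: "i * i = -1" using exists_sqrt_minus_one by blast
  define d where "d k = (if snd k then 1 else w)" for k :: "'a \<times> bool"
  define c where "c k = (if snd k then w * fst k else fst k)" for k :: "'a \<times> bool"
  define cls where "cls k L \<longleftrightarrow> in_class (d k) (c k) (to_disc i (rep L))" for k L
  let ?I = "fixed_field \<times> (UNIV :: bool set)"
  have uncovered: "uncovered w (to_disc i (rep L))" if "\<forall>k\<in>?I. \<not> cls k L" for L
    unfolding uncovered_def
  proof
    fix t assume "t \<in> fixed_field"
    then have "\<not> cls (t, True) L" and "\<not> cls (t, False) L"
      using that by simp_all
    then show "\<not> in_class 1 (w * t) (to_disc i (rep L)) \<and> \<not> in_class w t (to_disc i (rep L))"
      by (simp add: cls_def d_def c_def)
  qed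
  have "chromatic_number (PG2_points :: ('a \<times> 'a \<times> 'a) set set) ER_adj \<le> 2 * card ?I + 1"
  proof (rule chromatic_number_le_matching_classes[where cls = cls])
    show "finite (PG2_points :: ('a \<times> 'a \<times> 'a) set set)"
      by (rule finite_subset[OF subset_UNIV]) simp
    show "finite ?I"
      by simp
    show "ER_adj M L" if "ER_adj L M" for L M
      using that ER_adj_commute by blast
    show "\<not> ER_adj L L" for L
      by (simp add: ER_adj_def)
  next
    fix k L M M' assume "cls k L" "cls k M" "cls k M'"
      and "L \<in> PG2_points" "M \<in> PG2_points" "M' \<in> PG2_points" "ER_adj L M" "ER_adj L M'"
    moreover have "d k \<noteq> 0" using w by (simp add: d_def)
    ultimately show "M = M'"
      by (intro ER_adj_in_class_unique[OF i]) (auto simp: cls_def)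
  next
    fix L M assume "L \<in> PG2_points" "M \<in> PG2_points" "\<forall>k\<in>?I. \<not> cls k L" "\<forall>k\<in>?I. \<not> cls k M"
    then show "\<not> ER_adj L M"
      using ER_adj_uncovered[OF w i] uncovered by blast
  qed
  then show ?thesis by (simp add: card_cartesian_product)
qed

end

section \<open>The Frobenius involution\<close>

text \<open>The library's \<open>finite_field_power_card_eq_same\<close> is stated for the class \<open>finite_field\<close>, which
  a type variable of sort \<open>{field, finite}\<close> cannot be shown to belong to.\<close>
lemma field_power_card_eq_same:
  fixes x :: "'a::{field, finite}"
  shows "x ^ card (UNIV :: 'a set) = x"
proof (cases "x = 0")
  case False
  define U where "U = (UNIV :: 'a set) - {0}"
  have "(\<Prod>y\<in>U. x * y) = (\<Prod>y\<in>U. y)"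
    by (rule prod.reindex_bij_witness[of _ "\<lambda>y. y / x" "\<lambda>y. x * y"]) (use False in \<open>auto simp: U_def\<close>)
  hence "x ^ card U * (\<Prod>y\<in>U. y) = (\<Prod>y\<in>U. y)"
    by (simp add: prod.distrib)
  moreover have "(\<Prod>y\<in>U. y) \<noteq> 0"
    by (simp add: U_def)
  moreover have "card (UNIV :: 'a set) = Suc (card U)"
    unfolding U_def by (simp add: card_Diff_singleton card_gt_0_iff)
  ultimately show ?thesis by simp
qed (simp add: finite_UNIV_card_ge_0 power_0_left)

lemma card_fixed_points_power_le:
  assumes "2 \<le> s"
  shows "card {x :: 'a::field. x ^ s = x} \<le> s"
proof -
  define P :: "'a poly" where "P = Polynomial.monom 1 s + [:0, -1:]"
  have "degree P = s"
    using assms unfolding P_def by (subst degree_add_eq_left) (auto simp: degree_monom_eq)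
  moreover have "{x. x ^ s = x} = {x. poly P x = 0}"
    by (simp add: P_def poly_monom)
  ultimately show ?thesis
    using card_poly_roots_bound[of P] assms by fastforce
qed

lemma CHAR_eq_if_card_eq_prime_power:
  assumes "prime p" and "n \<ge> 1" and "card (UNIV :: 'a::{field, finite} set) = p ^ n"
  shows "CHAR('a) = p"
proof -
  have "prime CHAR('a)"
    by (intro prime_CHAR_semidom finite_imp_CHAR_pos) simp
  moreover have "CHAR('a) dvd p ^ n"
    using CHAR_dvd_CARD[where 'a = 'a] assms(3) by simp
  ultimately show ?thesis
    using assms(1) prime_dvd_power primes_dvd_imp_eq by blast
qed

lemma frobenius_involutive_field_automorphism:
  fixes p s :: nat
  assumes "prime p" and "odd p" and "s = p ^ r" and "r \<ge> 1"
    and card: "card (UNIV :: 'a::{field, finite} set) = s * s"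
  shows "involutive_field_automorphism (\<lambda>x::'a. x ^ s)"
proof
  have "p \<ge> 3"
    using prime_ge_2_nat[OF assms(1)] assms(2) by (cases "p = 2") auto
  have "card (UNIV :: 'a set) = p ^ (2 * r)"
    using card assms(3) by (simp add: power_mult_distrib power_mult mult.commute power2_eq_square)
  hence char: "CHAR('a) = p"
    using CHAR_eq_if_card_eq_prime_power[OF assms(1), of "2 * r"] assms(4) by simp
  show "(x + y) ^ s = x ^ s + y ^ s" for x y :: 'a
    by (rule freshmans_dream') (simp_all add: char assms(1,3))
  show "(x * y) ^ s = x ^ s * y ^ s" for x y :: 'a
    by (rule power_mult_distrib)
  show "(x ^ s) ^ s = x" for x :: 'a
    using field_power_card_eq_same[of x] card by (simp flip: power_mult)
  show "(2::'a) \<noteq> 0"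
  proof
    assume "(2::'a) = 0"
    hence "CHAR('a) dvd 2"
      by (metis of_nat_eq_0_iff_char_dvd of_nat_numeral)
    thus False using char \<open>p \<ge> 3\<close> by (auto dest: dvd_imp_le)
  qed
  have "3 \<le> s"
    using \<open>p \<ge> 3\<close> power_increasing[OF assms(4), of p] assms(3) by simp
  hence "s < s * s"
    using mult_strict_left_mono[of 1 s s] by simp
  hence "card {x::'a. x ^ s = x} < card (UNIV :: 'a set)"
    using card_fixed_points_power_le[of s, where 'a = 'a] card \<open>3 \<le> s\<close> by linarith
  thus "\<exists>x::'a. x ^ s \<noteq> x"
    by (metis (mono_tags) UNIV_I mem_Collect_eq subsetI subset_antisym order.irrefl)
qed

theorem mainTheorem2:
  fixes p r :: nat
  assumes "prime p" and "odd p" and "r \<ge> 1"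
    and "card (UNIV :: ('a::{field, finite}) set) = p ^ (2 * r)"
  shows "real (chromatic_number (PG2_points :: ('a \<times> 'a \<times> 'a) set set) ER_adj)
           \<le> 4 * sqrt (real (card (UNIV :: 'a set))) + 1"
proof -
  define s where "s = p ^ r"
  have card: "card (UNIV :: 'a set) = s * s"
    using assms(4) by (simp add: s_def flip: power_add mult_2)
  interpret involutive_field_automorphism "\<lambda>x::'a. x ^ s"
    using frobenius_involutive_field_automorphism[OF assms(1,2) s_def assms(3) card] .
  have "2 \<le> s"
    using prime_ge_2_nat[OF assms(1)] power_increasing[OF assms(3), of p] by (simp add: s_def)
  hence "card fixed_field \<le> s"
    using card_fixed_points_power_le[where 'a = 'a] by (simp add: fixed_field_def)
  hence "chromatic_number (PG2_points :: ('a \<times> 'a \<times> 'a) set set) ER_adj \<le> 4 * s + 1"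
    using chromatic_number_ER_le by linarith
  moreover have "sqrt (real (card (UNIV :: 'a set))) = real s"
    using card by (simp add: real_sqrt_mult)
  ultimately show ?thesis
    by (simp add: of_nat_mono)
qed

end
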